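(* Let $\mathcal{M}=\langle M,\circ,e\rangle$ be an mge monoid and let $\langle m_1,\dots,m_l\rangle,\langle n_1,\dots,n_l\rangle\in M^l$ have a joint equalizer. Then every mge for $\langle m_1,\dots,m_l\rangle$ is an mge for $\langle n_1,\dots,n_l\rangle$ and vice versa. Furthermore $Eq^{(l)}(m_1,\dots,m_l)=Eq^{(l)}(n_1,\dots,n_l)$.
   Context: In a monoid $\langle M,\circ,e\rangle$, a tuple $\langle m_1,\dots,m_n\rangle\in M^n$ is equalizable if there is $\langle x_1,\dots,x_n\rangle\in M^n$ (an equalizer) with $m_1x_1=\dots=m_nx_n$; $Eq^{(n)}(m_1,\dots,m_n)\subseteq M^n$ denotes the set of all equalizers of $\langle m_1,\dots,m_n\rangle$. An equalizer is a most general equalizer (mge) if every equalizer has the form $\langle x_1x,\dots,x_nx\rangle$ for some $x\in M$. An mge monoid is a monoid with right cancellation ($ac=bc\Rightarrow a=b$) in which every equalizable pair has an mge. A tuple $\langle x_1,\dots,x_n\rangle$ is a joint equalizer for $\langle m_1,\dots,m_n\rangle$ and $\langle m'_1,\dots,m'_n\rangle$ if it is an equalizer for both (it is not required that $m_ix_i=m'_ix_i$). *)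

theory Defs
  imports Main
begin

text \<open>A monoid is modelled by the type class monoid_mult (operation *, unit 1).
  Tuples in M^l are lists of length l.\<close>

definition is_equalizer :: "'a::monoid_mult list \<Rightarrow> 'a list \<Rightarrow> bool" where
  "is_equalizer ms xs \<longleftrightarrow> length xs = length ms \<and>
     (\<forall>i < length ms. \<forall>j < length ms. ms ! i * xs ! i = ms ! j * xs ! j)"

definition Eq :: "'a::monoid_mult list \<Rightarrow> 'a list set" where
  "Eq ms = {xs. is_equalizer ms xs}"

definition equalizable :: "'a::monoid_mult list \<Rightarrow> bool" where
  "equalizable ms \<longleftrightarrow> (\<exists>xs. is_equalizer ms xs)"

definition is_mge :: "'a::monoid_mult list \<Rightarrow> 'a list \<Rightarrow> bool" where
  "is_mge ms xs \<longleftrightarrow> is_equalizer ms xs \<and>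
     (\<forall>ys. is_equalizer ms ys \<longrightarrow> (\<exists>z. ys = map (\<lambda>x. x * z) xs))"

definition is_joint_equalizer :: "'a::monoid_mult list \<Rightarrow> 'a list \<Rightarrow> 'a list \<Rightarrow> bool" where
  "is_joint_equalizer ms ns xs \<longleftrightarrow> is_equalizer ms xs \<and> is_equalizer ns xs"

definition mge_monoid :: "'a::monoid_mult itself \<Rightarrow> bool" where
  "mge_monoid _ \<longleftrightarrow>
     (\<forall>a b c :: 'a. a * c = b * c \<longrightarrow> a = b) \<and>
     (\<forall>m1 m2 :: 'a. equalizable [m1, m2] \<longrightarrow> (\<exists>xs. is_mge [m1, m2] xs))"

end

theory Submission
  imports Defs
begin

text \<open>Both conditions on a tuple of equalizers are pairwise, so it suffices to compare two
  coordinates. Let \<open>\<langle>a, b\<rangle>\<close> be an mge of \<open>\<langle>m\<^sub>i, m\<^sub>j\<rangle>\<close>. The joint equalizer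
  factors as \<open>\<langle>a z, b z\<rangle>\<close>, so \<open>n\<^sub>i a z = n\<^sub>j b z\<close> and right cancellation gives
  \<open>n\<^sub>i a = n\<^sub>j b\<close>. Every equalizer of \<open>\<langle>m\<^sub>i, m\<^sub>j\<rangle>\<close> has the form \<open>\<langle>a z', b z'\<rangle>\<close> and
  therefore equalizes \<open>\<langle>n\<^sub>i, n\<^sub>j\<rangle>\<close> as well. By symmetry the two tuples have the same
  equalizers, hence the same mges.\<close>

lemma is_equalizer_pair_iff:
  "is_equalizer [a, b] [x, y] \<longleftrightarrow> (a::'a::monoid_mult) * x = b * y"
proof
  assume "is_equalizer [a, b] [x, y]"
  then show "a * x = b * y" unfolding is_equalizer_def by (metis length_Cons nth_Cons_0
      nth_Cons_Suc One_nat_def lessI zero_less_Suc list.size(3))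
next
  assume "a * x = b * y"
  then show "is_equalizer [a, b] [x, y]"
    unfolding is_equalizer_def by (auto simp: less_Suc_eq)
qed

lemma mge_monoid_mult_right_cancel:
  fixes a b c :: "'a::monoid_mult"
  assumes "mge_monoid TYPE('a)" and "a * c = b * c"
  shows "a = b"
  using assms unfolding mge_monoid_def by blast

lemma mge_monoid_pair_has_mge:
  fixes m1 m2 :: "'a::monoid_mult"
  assumes "mge_monoid TYPE('a)" and "m1 * x1 = m2 * x2"
  obtains a b where "is_mge [m1, m2] [a, b]"
proof -
  have "equalizable [m1, m2]"
    using assms(2) is_equalizer_pair_iff unfolding equalizable_def by blast
  then obtain xs where xs: "is_mge [m1, m2] xs"
    using assms(1) unfolding mge_monoid_def by blast
  then have "length xs = 2" unfolding is_mge_def is_equalizer_def by simp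
  then obtain a b where "xs = [a, b]" by (auto simp: numeral_2_eq_2 length_Suc_conv)
  with xs show thesis using that by blast
qed

lemma is_mge_pair_factor:
  assumes "is_mge [m1, m2] [a, b]" and "(m1::'a::monoid_mult) * x1 = m2 * x2"
  obtains z where "x1 = a * z" and "x2 = b * z"
  using assms is_equalizer_pair_iff unfolding is_mge_def by fastforce

lemma pair_equalizer_transfer:
  fixes m1 m2 n1 n2 :: "'a::monoid_mult"
  assumes M: "mge_monoid TYPE('a)"
    and joint: "m1 * y1 = m2 * y2" "n1 * y1 = n2 * y2"
    and w: "m1 * w1 = m2 * w2"
  shows "n1 * w1 = n2 * w2"
proof -
  obtain a b where mge: "is_mge [m1, m2] [a, b]"
    using mge_monoid_pair_has_mge[OF M joint(1)] .
  obtain z where y: "y1 = a * z" "y2 = b * z"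
    using is_mge_pair_factor[OF mge joint(1)] .
  obtain z' where w': "w1 = a * z'" "w2 = b * z'"
    using is_mge_pair_factor[OF mge w] .
  have "n1 * a * z = n2 * b * z" using joint(2) by (simp add: y mult.assoc)
  then have "n1 * a = n2 * b" by (rule mge_monoid_mult_right_cancel[OF M])
  then show ?thesis by (simp add: w' flip: mult.assoc)
qed

lemma is_equalizer_transfer:
  fixes ms ns :: "'a::monoid_mult list"
  assumes M: "mge_monoid TYPE('a)" and len: "length ms = length ns"
    and joint: "is_joint_equalizer ms ns ys" and w: "is_equalizer ms ws"
  shows "is_equalizer ns ws"
  unfolding is_equalizer_def
proof (intro conjI allI impI)
  show "length ws = length ns" using w len by (simp add: is_equalizer_def)
  fix i j assume "i < length ns" "j < length ns"
  then have "ms ! i * ys ! i = ms ! j * ys ! j" "ns ! i * ys ! i = ns ! j * ys ! j"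
    and "ms ! i * ws ! i = ms ! j * ws ! j"
    using joint w len unfolding is_joint_equalizer_def is_equalizer_def by metis+
  then show "ns ! i * ws ! i = ns ! j * ws ! j" by (rule pair_equalizer_transfer[OF M])
qed

lemma Eq_eq_if_joint_equalizer:
  fixes ms ns :: "'a::monoid_mult list"
  assumes "mge_monoid TYPE('a)" and "length ms = length ns"
    and "is_joint_equalizer ms ns ys"
  shows "Eq ms = Eq ns"
proof -
  have "is_joint_equalizer ns ms ys"
    using assms(3) by (simp add: is_joint_equalizer_def)
  then show ?thesis
    using is_equalizer_transfer[OF assms] is_equalizer_transfer[OF assms(1) assms(2)[symmetric]]
    unfolding Eq_def by blast
qed

lemma is_mge_eq_if_Eq_eq:
  assumes "Eq ms = Eq ns"
  shows "is_mge ms = is_mge ns"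
proof -
  have "is_equalizer ms xs \<longleftrightarrow> is_equalizer ns xs" for xs
    using assms unfolding Eq_def by blast
  then show ?thesis by (simp add: fun_eq_iff is_mge_def)
qed

theorem lemma3:
  fixes ms ns :: "'a::monoid_mult list"
  assumes "mge_monoid TYPE('a)"
    and "length ms = l" and "length ns = l"
    and "\<exists>xs. is_joint_equalizer ms ns xs"
  shows "(\<forall>xs. is_mge ms xs \<longrightarrow> is_mge ns xs) \<and> (\<forall>xs. is_mge ns xs \<longrightarrow> is_mge ms xs)
         \<and> Eq ms = Eq ns"
proof -
  obtain ys where "is_joint_equalizer ms ns ys" using assms(4) by blast
  then have "Eq ms = Eq ns"
    using Eq_eq_if_joint_equalizer[OF assms(1)] assms(2,3) by simp
  moreover from this have "is_mge ms = is_mge ns" by (rule is_mge_eq_if_Eq_eq)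
  ultimately show ?thesis by simp
qed

end
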